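(* Assume (C-1) and (C-2), and let $\mathbf M_t$ be symmetric PSD with $\sigma_{\max}(\mathbf M_t)=1$ and $\mathrm{srank}(\mathbf M_t)\le s$. Then the subspace zeroth-order gradient estimator $\widehat{\mathbf g}_t$ satisfies $$\mathbb E\big[\|\widehat{\mathbf g}_t\|\big]^2\le\mathbb E\big[\|\widehat{\mathbf g}_t\|^2\big]\le\frac{15\mu^2L^2s^3}{2}+4(s+2)\Big(\|\nabla\mathcal{L}(\bm\theta_t)\|^2+\frac{\sigma^2}{B}\Big),$$ where the expectation is over $\mathbf u_t$ and the minibatch $\mathcal B_t$ of size $B$.
   Context: Per-sample losses $\mathcal{L}_i$, overall loss $\mathcal{L}$, minibatch loss $\mathcal{L}(\bm\theta;\mathcal B_t)=\frac1B\sum_{i\in\mathcal B_t}\mathcal{L}_i(\bm\theta)$ with $i\in\mathcal B_t$ sampled independently. (C-1): each $\mathcal{L}_i$ is $L$-smooth. (C-2): $\mathbb E[\nabla\mathcal{L}_i(\bm\theta)]=\nabla\mathcal{L}(\bm\theta)$, $\mathbb E\|\nabla\mathcal{L}(\bm\theta)-\nabla\mathcal{L}_i(\bm\theta)\|^2\le\sigma^2$, $\|\nabla\mathcal{L}(\bm\theta)\|\le G$. Estimator: $\widehat{\mathbf g}_t=\frac{\mathcal{L}(\bm\theta_t+\mu\mathbf M_t\mathbf u_t;\mathcal B_t)-\mathcal{L}(\bm\theta_t-\mu\mathbf M_t\mathbf u_t;\mathcal B_t)}{2\mu}\mathbf M_t\mathbf u_t$ with $\mathbf u_t\sim\mathcal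 N(\mathbf 0,\mathbf I_d)$, $\mu>0$. $\mathrm{srank}(\mathbf A)=\sum_i\sigma_i(\mathbf A)^2/\sigma_{\max}(\mathbf A)^2$. *)

theory Defs
  imports "HOL-Probability.Probability"
begin

definition std_gauss_vec :: "(real^'d) measure" where
  "std_gauss_vec = density lborel (\<lambda>x. ennreal (\<Prod>i\<in>UNIV. std_normal_density (x $ i)))"

text \<open>Largest singular value = spectral (operator) norm.\<close>
definition sigma_max :: "real^'n^'m \<Rightarrow> real" where
  "sigma_max A = onorm (\<lambda>x. A *v x)"

text \<open>Sum of squared singular values = squared Frobenius norm.\<close>
definition sum_sq_singular :: "real^'n^'m \<Rightarrow> real" where
  "sum_sq_singular A = (\<Sum>i\<in>UNIV. \<Sum>j\<in>UNIV. (A $ i $ j)\<^sup>2)"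

definition srank :: "real^'n^'m \<Rightarrow> real" where
  "srank A = sum_sq_singular A / (sigma_max A)\<^sup>2"

definition batch_loss :: "('i \<Rightarrow> real^'d \<Rightarrow> real) \<Rightarrow> nat \<Rightarrow> (nat \<Rightarrow> 'i) \<Rightarrow> real^'d \<Rightarrow> real" where
  "batch_loss loss B b \<theta> = (1 / real B) * (\<Sum>j<B. loss (b j) \<theta>)"

definition zo_est :: "('i \<Rightarrow> real^'d \<Rightarrow> real) \<Rightarrow> nat \<Rightarrow> real \<Rightarrow> real^'d^'d
      \<Rightarrow> real^'d \<Rightarrow> real^'d \<Rightarrow> (nat \<Rightarrow> 'i) \<Rightarrow> real^'d" where
  "zo_est loss B \<mu> M \<theta> u b =
     ((batch_loss loss B b (\<theta> + \<mu> *\<^sub>R (M *v u)) - batch_loss loss B b (\<theta> - \<mu> *\<^sub>R (M *v u))) / (2 * \<mu>))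
       *\<^sub>R (M *v u)"

end

theory Submission
  imports Defs
begin

text \<open>Write \<open>v = M u\<close>. By the symmetric first-order Taylor bound for the \<open>L\<close>-smooth minibatch loss,
  the squared norm of the estimator is at most
  \<open>4 (\<nabla>L \<bullet> v)\<^sup>2 \<parallel>v\<parallel>\<^sup>2 + 4 ((g\<^sub>B - \<nabla>L) \<bullet> v)\<^sup>2 \<parallel>v\<parallel>\<^sup>2 + L\<^sup>2 \<mu>\<^sup>2 \<parallel>v\<parallel>\<^sup>6 / 2\<close>, where \<open>g\<^sub>B\<close> is the
  minibatch gradient. Averaging over the i.i.d. minibatch divides the middle term by \<open>B\<close>. The Gaussian
  identity \<open>E (w \<bullet> u)\<^sup>2 \<parallel>M u\<parallel>\<^sup>2 = \<parallel>w\<parallel>\<^sup>2 \<parallel>M\<parallel>\<^sub>F\<^sup>2 + 2 \<parallel>M w\<parallel>\<^sup>2\<close> (from fourth moments by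
  polarization) and the bound \<open>E \<parallel>M u\<parallel>\<^sup>6 \<le> 15 \<parallel>M\<parallel>\<^sub>F\<^sup>6\<close> (from sixth moments by convexity of
  \<open>t\<^sup>3\<close>) then give the estimate with \<open>\<parallel>M\<parallel>\<^sub>F\<^sup>2 = srank M \<le> s\<close>, since \<open>\<sigma>\<^sub>m\<^sub>a\<^sub>x(M) = 1\<close>.
  The first inequality is Cauchy-Schwarz.\<close>

section \<open>Standard Gaussian vectors\<close>

abbreviation std_normal :: "real measure" where
  "std_normal \<equiv> density lborel (\<lambda>x. ennreal (std_normal_density x))"

lemma prob_space_std_normal: "prob_space std_normal"
  using prob_space_normal_density[of 1 0] by simp

lemma space_std_gauss_vec [simp]: "space std_gauss_vec = UNIV"
  by (simp add: std_gauss_vec_def)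

lemma sets_std_gauss_vec [simp, measurable_cong]: "sets std_gauss_vec = sets borel"
  by (simp add: std_gauss_vec_def)

lemma nn_integral_lborel_vec_prod:
  fixes g :: "'d::finite \<Rightarrow> real \<Rightarrow> ennreal"
  assumes [measurable]: "\<And>i. g i \<in> borel_measurable borel"
  shows "(\<integral>\<^sup>+x. (\<Prod>i\<in>UNIV. g i (x $ i)) \<partial>(lborel :: (real^'d) measure))
       = (\<Prod>i\<in>UNIV. \<integral>\<^sup>+x. g i x \<partial>lborel)"
proof -
  have Basis: "(Basis :: (real^'d) set) = range (\<lambda>i. axis i 1)"
    by (auto simp: Basis_vec_def)
  have inj: "inj (\<lambda>i::'d. axis i (1::real))"
    by (auto simp: inj_def axis_eq_axis)
  define h where "h b = g (SOME i. b = axis i (1::real))" for b :: "real^'d"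
  have h_axis: "h (axis i 1) = g i" for i
    unfolding h_def by (rule arg_cong[where f = g]) (auto simp: axis_eq_axis)
  have "(\<integral>\<^sup>+x. (\<Prod>b\<in>Basis. h b (x \<bullet> b)) \<partial>(lborel :: (real^'d) measure))
      = (\<Prod>b\<in>Basis. \<integral>\<^sup>+x. h b x \<partial>lborel)"
    by (rule nn_integral_lborel_prod) (auto simp: Basis h_axis)
  then show ?thesis
    unfolding Basis by (simp add: prod.reindex[OF inj] h_axis inner_axis)
qed

lemma emeasure_std_gauss_vec_box:
  assumes [measurable]: "\<And>i. A i \<in> sets borel"
  shows "emeasure (std_gauss_vec :: (real^'d) measure) {u. \<forall>i. u $ i \<in> A i}
       = (\<Prod>i\<in>UNIV. emeasure std_normal (A i))"
proof -
  have box: "{u::real^'d. \<forall>i. u $ i \<in> A i} = (\<Inter>i. (\<lambda>u. u $ i) -` A i \<inter> space lborel)"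
    by auto
  have [measurable]: "{u::real^'d. \<forall>i. u $ i \<in> A i} \<in> sets lborel"
    unfolding box by (intro sets.finite_INT measurable_sets[OF _ assms]) auto
  have "emeasure (std_gauss_vec :: (real^'d) measure) {u. \<forall>i. u $ i \<in> A i}
      = (\<integral>\<^sup>+x. (\<Prod>i\<in>UNIV. ennreal (std_normal_density (x $ i)) * indicator (A i) (x $ i))
           \<partial>(lborel :: (real^'d) measure))"
    unfolding std_gauss_vec_def
    by (subst emeasure_density)
       (auto intro!: nn_integral_cong simp: prod.distrib prod_ennreal 
             indicator_def)
  also have "\<dots> = (\<Prod>i\<in>UNIV. \<integral>\<^sup>+x. ennreal (std_normal_density x) * indicator (A i) x \<partial>lborel)"
    by (rule nn_integral_lborel_vec_prod) measurable
  finally show ?thesis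
    by (simp add: emeasure_density)
qed

lemma prob_space_std_gauss_vec: "prob_space (std_gauss_vec :: (real^'d) measure)"
proof
  have "emeasure (std_gauss_vec :: (real^'d) measure) {u. \<forall>i. u $ i \<in> UNIV} = 1"
    using emeasure_std_gauss_vec_box[of "\<lambda>_. UNIV"] prob_space.emeasure_space_1[OF prob_space_std_normal]
    by simp
  then show "emeasure (std_gauss_vec :: (real^'d) measure) (space std_gauss_vec) = 1"
    by simp
qed

lemma distr_std_gauss_vec_PiM:
  "distr (std_gauss_vec :: (real^'d) measure) (\<Pi>\<^sub>M i\<in>UNIV. borel) (\<lambda>u. \<lambda>i\<in>UNIV. u $ i)
   = (\<Pi>\<^sub>M i\<in>UNIV. std_normal)"
proof (rule product_sigma_finite.PiM_eqI)
  show "product_sigma_finite (\<lambda>_::'d. std_normal)"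
    by (simp add: product_sigma_finite_def prob_space_imp_sigma_finite prob_space_std_normal)
  fix A :: "'d \<Rightarrow> real set"
  assume A: "\<And>i. i \<in> UNIV \<Longrightarrow> A i \<in> sets std_normal"
  have "(\<lambda>u::real^'d. \<lambda>i\<in>UNIV. u $ i) -` Pi\<^sub>E UNIV A \<inter> space std_gauss_vec = {u. \<forall>i. u $ i \<in> A i}"
    by auto
  with A show "emeasure (distr std_gauss_vec (\<Pi>\<^sub>M i\<in>UNIV. borel) (\<lambda>u. \<lambda>i\<in>UNIV. u $ i)) (Pi\<^sub>E UNIV A)
      = (\<Prod>i\<in>UNIV. emeasure std_normal (A i))"
    by (subst emeasure_distr) (auto simp: emeasure_std_gauss_vec_box intro!: sets_PiM_I_finite)
qed (auto intro!: sets_PiM_cong)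

lemma distr_std_gauss_vec_component:
  "distr (std_gauss_vec :: (real^'d) measure) borel (\<lambda>u. u $ i) = std_normal"
proof -
  have "distr (std_gauss_vec :: (real^'d) measure) borel (\<lambda>u. u $ i)
      = distr (distr std_gauss_vec (\<Pi>\<^sub>M i\<in>UNIV. borel) (\<lambda>u. \<lambda>i\<in>UNIV. u $ i)) borel (\<lambda>f. f i)"
    by (subst distr_distr) (auto simp: comp_def)
  also have "\<dots> = distr (\<Pi>\<^sub>M i\<in>(UNIV::'d set). std_normal) std_normal (\<lambda>f. f i)"
    unfolding distr_std_gauss_vec_PiM by (rule distr_cong) auto
  also have "\<dots> = std_normal"
    by (rule distr_PiM_component) (auto simp: prob_space_std_normal)
  finally show ?thesis .
qed

lemma indep_vars_std_gauss_vec_components: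
  "prob_space.indep_vars (std_gauss_vec :: (real^'d) measure) (\<lambda>_. borel) (\<lambda>i u. u $ i) UNIV"
proof -
  interpret prob_space "std_gauss_vec :: (real^'d) measure"
    by (rule prob_space_std_gauss_vec)
  show ?thesis
    by (subst indep_vars_iff_distr_eq_PiM)
       (auto simp: distr_std_gauss_vec_component distr_std_gauss_vec_PiM)
qed

lemma distributed_std_gauss_vec_component:
  "distributed (std_gauss_vec :: (real^'d) measure) lborel (\<lambda>u. u $ i) std_normal_density"
  using distr_std_gauss_vec_component[of i]
  by (auto simp: distributed_def cong: distr_cong)

lemma distributed_std_gauss_vec_inner:
  fixes a :: "real^'d"
  assumes "a \<noteq> 0"
  shows "distributed std_gauss_vec lborel (\<lambda>u. a \<bullet> u) (normal_density 0 (norm a))"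
proof -
  interpret prob_space "std_gauss_vec :: (real^'d) measure"
    by (rule prob_space_std_gauss_vec)
  define I where "I = {i. a $ i \<noteq> 0}"
  have I: "finite I" "I \<noteq> {}"
    using assms by (auto simp: I_def vec_eq_iff)
  have "indep_vars (\<lambda>_. borel) (\<lambda>i u. a $ i * u $ i) I"
    using indep_vars_compose2[OF indep_vars_subset[OF indep_vars_std_gauss_vec_components],
        of I "\<lambda>i x. a $ i * x" "\<lambda>_. borel"]
    by auto
  moreover have "distributed std_gauss_vec lborel (\<lambda>u. a $ i * u $ i) (normal_density 0 \<bar>a $ i\<bar>)"
    if "i \<in> I" for i
    using normal_density_affine[OF distributed_std_gauss_vec_component, of "a $ i" 0] that
    by (simp add: I_def)
  ultimately have "distributed std_gauss_vec lborel (\<lambda>u. \<Sum>i\<in>I. a $ i * u $ i)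
      (normal_density (\<Sum>i\<in>I. 0) (sqrt (\<Sum>i\<in>I. \<bar>a $ i\<bar>\<^sup>2)))"
    by (intro sum_indep_normal I) (auto simp: I_def)
  moreover have "(\<Sum>i\<in>I. a $ i * u $ i) = a \<bullet> u" for u
    unfolding inner_vec_def inner_real_def by (intro sum.mono_neutral_left) (auto simp: I_def)
  moreover have "sqrt (\<Sum>i\<in>I. \<bar>a $ i\<bar>\<^sup>2) = norm a"
    unfolding norm_vec_def L2_set_def by (auto intro!: arg_cong[where f = sqrt] sum.mono_neutral_left simp: I_def)
  ultimately show ?thesis
    by simp
qed

lemma nn_integral_std_gauss_vec_inner_even_power:
  fixes a :: "real^'d"
  assumes "k > 0"
  shows "(\<integral>\<^sup>+u. ennreal ((a \<bullet> u) ^ (2 * k)) \<partial>std_gauss_vec)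
       = ennreal (fact (2 * k) / (2 ^ k * fact k) * norm a ^ (2 * k))"
proof (cases "a = 0")
  case True
  with assms show ?thesis
    by (simp add: power_0_left)
next
  case False
  then have a: "norm a > 0"
    by simp
  have "(\<integral>\<^sup>+u. ennreal ((a \<bullet> u) ^ (2 * k)) \<partial>std_gauss_vec)
      = (\<integral>\<^sup>+x. ennreal (normal_density 0 (norm a) x * (x - 0) ^ (2 * k)) \<partial>lborel)"
    by (subst distributed_nn_integral[OF distributed_std_gauss_vec_inner[OF False], symmetric])
       (auto intro!: nn_integral_cong simp: ennreal_mult')
  also have "\<dots> = ennreal (fact (2 * k) / ((2 / (norm a)\<^sup>2) ^ k * fact k))"
    using normal_moment_even[OF a, of 0 k]
    by (subst nn_integral_eq_integrable) (auto simp: has_bochner_integral_iff)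
  also have "fact (2 * k) / ((2 / (norm a)\<^sup>2) ^ k * fact k) = fact (2 * k) / (2 ^ k * fact k) * norm a ^ (2 * k)"
    using a by (simp add: power_divide field_simps flip: power_mult)
  finally show ?thesis .
qed

lemma nn_integral_std_gauss_vec_inner_pow6:
  "(\<integral>\<^sup>+u. ennreal ((a \<bullet> u) ^ 6) \<partial>std_gauss_vec) = ennreal (15 * norm (a :: real^'d) ^ 6)"
  using nn_integral_std_gauss_vec_inner_even_power[of 3 a] by (simp add: fact_numeral)

lemma has_bochner_integral_std_gauss_vec_inner_pow4:
  "has_bochner_integral std_gauss_vec (\<lambda>u. (a \<bullet> u) ^ 4) (3 * norm (a :: real^'d) ^ 4)"
  using nn_integral_std_gauss_vec_inner_even_power[of 2 a]
  by (intro has_bochner_integral_nn_integral) (simp_all add: fact_numeral zero_le_even_power)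

lemma nn_integral_std_gauss_vec_inner_sq_mult:
  fixes w a :: "real^'d"
  shows "(\<integral>\<^sup>+u. ennreal ((w \<bullet> u)\<^sup>2 * (a \<bullet> u)\<^sup>2) \<partial>std_gauss_vec)
       = ennreal ((norm w)\<^sup>2 * (norm a)\<^sup>2 + 2 * (w \<bullet> a)\<^sup>2)"
proof -
  have polarization: "(w \<bullet> u)\<^sup>2 * (a \<bullet> u)\<^sup>2
      = (((w + a) \<bullet> u) ^ 4 + ((w - a) \<bullet> u) ^ 4 - 2 * (w \<bullet> u) ^ 4 - 2 * (a \<bullet> u) ^ 4) / 12" for u
    by (simp add: inner_add_left inner_diff_left) algebra
  have norm_pm: "(norm (w + a))\<^sup>2 = (norm w)\<^sup>2 + 2 * (w \<bullet> a) + (norm a)\<^sup>2"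
    "(norm (w - a))\<^sup>2 = (norm w)\<^sup>2 - 2 * (w \<bullet> a) + (norm a)\<^sup>2"
    by (simp_all add: power2_norm_eq_inner algebra_simps inner_commute)
  have "(3 * norm (w + a) ^ 4 + 3 * norm (w - a) ^ 4 - 2 * (3 * norm w ^ 4) - 2 * (3 * norm a ^ 4)) / 12
      = (norm w)\<^sup>2 * (norm a)\<^sup>2 + 2 * (w \<bullet> a)\<^sup>2"
  proof -
    have sq_sq: "t ^ 4 = (t\<^sup>2)\<^sup>2" for t :: real
      by (simp flip: power_mult)
    show ?thesis
      unfolding sq_sq norm_pm by algebra
  qed
  moreover have "has_bochner_integral std_gauss_vec (\<lambda>u. (w \<bullet> u)\<^sup>2 * (a \<bullet> u)\<^sup>2)
      ((3 * norm (w + a) ^ 4 + 3 * norm (w - a) ^ 4 - 2 * (3 * norm w ^ 4) - 2 * (3 * norm a ^ 4)) / 12)"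
    unfolding polarization
    by (intro has_bochner_integral_divide_zero has_bochner_integral_diff has_bochner_integral_add
        has_bochner_integral_mult_right has_bochner_integral_std_gauss_vec_inner_pow4)
  ultimately show ?thesis
    by (subst nn_integral_eq_integrable) (auto simp: has_bochner_integral_iff)
qed

section \<open>Gaussian moments of a matrix image\<close>

lemma norm_matrix_vector_mult_sq:
  "(norm ((M :: real^'n^'m) *v u))\<^sup>2 = (\<Sum>i\<in>UNIV. (M $ i \<bullet> u)\<^sup>2)"
  by (simp add: norm_vec_def L2_set_def sum_nonneg matrix_vector_mul_component)

lemma sum_sq_singular_eq_sum_rows:
  "sum_sq_singular (M :: real^'n^'m) = (\<Sum>i\<in>UNIV. (norm (M $ i))\<^sup>2)"
  by (simp add: sum_sq_singular_def norm_vec_def L2_set_def sum_nonneg)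

lemma sum_sq_singular_nonneg: "sum_sq_singular (M :: real^'n^'m) \<ge> 0"
  by (simp add: sum_sq_singular_def sum_nonneg)

lemma norm_matrix_vector_mult_le_sigma_max: "norm (A *v x) \<le> sigma_max A * norm x"
  unfolding sigma_max_def by (rule onorm[OF matrix_vector_mul_bounded_linear])

lemma sum_sq_singular_eq_srank: "sigma_max A = 1 \<Longrightarrow> sum_sq_singular A = srank A"
  by (simp add: srank_def)

lemma borel_measurable_matrix_vector_mult [measurable]:
  "(\<lambda>u. (M :: real^'n^'m) *v u) \<in> borel_measurable borel"
  by (intro borel_measurable_continuous_onI linear_continuous_on matrix_vector_mul_bounded_linear)

lemma nn_integral_std_gauss_vec_inner_sq_norm_sq:
  fixes M :: "real^'n^'m" and w :: "real^'n"
  shows "(\<integral>\<^sup>+u. ennreal ((w \<bullet> u)\<^sup>2 * (norm (M *v u))\<^sup>2) \<partial>std_gauss_vec)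
       = ennreal ((norm w)\<^sup>2 * sum_sq_singular M + 2 * (norm (M *v w))\<^sup>2)"
proof -
  have "(\<integral>\<^sup>+u. ennreal ((w \<bullet> u)\<^sup>2 * (norm (M *v u))\<^sup>2) \<partial>std_gauss_vec)
      = (\<Sum>i\<in>UNIV. \<integral>\<^sup>+u. ennreal ((w \<bullet> u)\<^sup>2 * (M $ i \<bullet> u)\<^sup>2) \<partial>std_gauss_vec)"
    unfolding norm_matrix_vector_mult_sq sum_distrib_left
    by (subst nn_integral_sum[symmetric]) (auto intro!: nn_integral_cong simp: sum_ennreal)
  also have "\<dots> = ennreal (\<Sum>i\<in>UNIV. (norm w)\<^sup>2 * (norm (M $ i))\<^sup>2 + 2 * (w \<bullet> M $ i)\<^sup>2)"
    unfolding nn_integral_std_gauss_vec_inner_sq_mult by (rule sum_ennreal) simp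
  also have "(\<Sum>i\<in>UNIV. (norm w)\<^sup>2 * (norm (M $ i))\<^sup>2 + 2 * (w \<bullet> M $ i)\<^sup>2)
      = (norm w)\<^sup>2 * sum_sq_singular M + 2 * (norm (M *v w))\<^sup>2"
    by (simp add: sum.distrib sum_distrib_left sum_sq_singular_eq_sum_rows
        norm_matrix_vector_mult_sq inner_commute)
  finally show ?thesis .
qed

lemma nn_integral_std_gauss_vec_inner_sq_norm_sq_le:
  fixes M :: "real^'d^'d"
  assumes sym: "transpose M = M" and contr: "\<And>x. norm (M *v x) \<le> norm x"
  shows "(\<integral>\<^sup>+u. ennreal ((w \<bullet> (M *v u))\<^sup>2 * (norm (M *v u))\<^sup>2) \<partial>std_gauss_vec)
       \<le> ennreal ((sum_sq_singular M + 2) * (norm w)\<^sup>2)"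
proof -
  have "w \<bullet> (M *v u) = (M *v w) \<bullet> u" for u
    by (metis dot_lmul_matrix sym transpose_transpose vector_transpose_matrix)
  then have "(\<integral>\<^sup>+u. ennreal ((w \<bullet> (M *v u))\<^sup>2 * (norm (M *v u))\<^sup>2) \<partial>std_gauss_vec)
      = ennreal ((norm (M *v w))\<^sup>2 * sum_sq_singular M + 2 * (norm (M *v (M *v w)))\<^sup>2)"
    by (simp add: nn_integral_std_gauss_vec_inner_sq_norm_sq)
  also have "\<dots> \<le> ennreal ((norm w)\<^sup>2 * sum_sq_singular M + 2 * (norm w)\<^sup>2)"
    using contr[of w] contr[of "M *v w"] sum_sq_singular_nonneg[of M]
    by (intro ennreal_leI add_mono mult_right_mono mult_left_mono power_mono) auto
  finally show ?thesis
    by (simp add: algebra_simps)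
qed

lemma power3_sum_le_weighted:
  fixes c y :: "'i \<Rightarrow> real"
  assumes J: "finite J" and c: "\<And>i. i \<in> J \<Longrightarrow> c i > 0" and y: "\<And>i. i \<in> J \<Longrightarrow> y i \<ge> 0"
  shows "(\<Sum>i\<in>J. y i) ^ 3 \<le> (\<Sum>i\<in>J. c i)\<^sup>2 * (\<Sum>i\<in>J. y i ^ 3 / (c i)\<^sup>2)"
proof (cases "J = {}")
  case False
  define C where "C = (\<Sum>i\<in>J. c i)"
  have C: "C > 0"
    unfolding C_def using J False c by (intro sum_pos) auto
  have "(\<Sum>i\<in>J. (c i / C) *\<^sub>R (y i / c i)) ^ 3 \<le> (\<Sum>i\<in>J. (c i / C) * (y i / c i) ^ 3)"
    using convex_on_sum[OF J False convex_power_odd[of 3], of "\<lambda>i. c i / C" "\<lambda>i. y i / c i"] C c y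
    by (simp add: C_def[symmetric] sum_divide_distrib[symmetric] less_imp_le)
  also have "(\<Sum>i\<in>J. (c i / C) *\<^sub>R (y i / c i)) = (\<Sum>i\<in>J. y i) / C"
    using c by (simp add: sum_divide_distrib) (intro sum.cong, auto dest: c)
  also have "(\<Sum>i\<in>J. (c i / C) * (y i / c i) ^ 3) = (\<Sum>i\<in>J. y i ^ 3 / (c i)\<^sup>2) / C"
    using c by (simp add: sum_divide_distrib) (intro sum.cong, auto simp: field_simps power2_eq_square power3_eq_cube)
  finally show ?thesis
    using C by (simp add: C_def[symmetric] power_divide field_simps power2_eq_square power3_eq_cube)
qed simp

lemma norm_matrix_vector_mult_pow6_le:
  fixes M :: "real^'n^'m"
  shows "norm (M *v u) ^ 6 \<le> (\<Sum>i | M $ i \<noteq> 0. (sum_sq_singular M)\<^sup>2 / norm (M $ i) ^ 4 * (M $ i \<bullet> u) ^ 6)"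
proof -
  define J where "J = {i. M $ i \<noteq> 0}"
  define c where "c i = (norm (M $ i))\<^sup>2" for i
  have S: "sum_sq_singular M = (\<Sum>i\<in>J. c i)"
    unfolding sum_sq_singular_eq_sum_rows c_def by (intro sum.mono_neutral_right) (auto simp: J_def)
  have rows: "(norm (M *v u))\<^sup>2 = (\<Sum>i\<in>J. (M $ i \<bullet> u)\<^sup>2)"
    unfolding norm_matrix_vector_mult_sq by (intro sum.mono_neutral_right) (auto simp: J_def)
  have "norm (M *v u) ^ 6 = ((norm (M *v u))\<^sup>2) ^ 3"
    by (simp flip: power_mult)
  also have "\<dots> = (\<Sum>i\<in>J. (M $ i \<bullet> u)\<^sup>2) ^ 3"
    by (simp only: rows)
  also have "\<dots> \<le> (sum_sq_singular M)\<^sup>2 * (\<Sum>i\<in>J. ((M $ i \<bullet> u)\<^sup>2) ^ 3 / (c i)\<^sup>2)"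
    unfolding S by (rule power3_sum_le_weighted) (auto simp: c_def J_def)
  finally show ?thesis
    by (simp add: J_def c_def sum_distrib_left field_simps flip: power_mult)
qed

lemma nn_integral_std_gauss_vec_norm_pow6_le:
  fixes M :: "real^'n^'m"
  shows "(\<integral>\<^sup>+u. ennreal (norm (M *v u) ^ 6) \<partial>std_gauss_vec) \<le> ennreal (15 * (sum_sq_singular M) ^ 3)"
proof -
  define S where "S = sum_sq_singular M"
  define J where "J = {i. M $ i \<noteq> 0}"
  have "(\<integral>\<^sup>+u. ennreal (norm (M *v u) ^ 6) \<partial>std_gauss_vec)
      \<le> (\<integral>\<^sup>+u. (\<Sum>i\<in>J. ennreal (S\<^sup>2 / norm (M $ i) ^ 4) * ennreal ((M $ i \<bullet> u) ^ 6)) \<partial>std_gauss_vec)"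
    using norm_matrix_vector_mult_pow6_le[of M]
    by (intro nn_integral_mono)
       (simp add: S_def J_def ennreal_leI sum_ennreal zero_le_even_power flip: ennreal_mult)
  also have "\<dots> = (\<Sum>i\<in>J. ennreal (S\<^sup>2 / norm (M $ i) ^ 4) * ennreal (15 * norm (M $ i) ^ 6))"
    by (simp add: nn_integral_sum nn_integral_cmult nn_integral_std_gauss_vec_inner_pow6)
  also have "\<dots> = ennreal (\<Sum>i\<in>J. 15 * S\<^sup>2 * (norm (M $ i))\<^sup>2)"
  proof -
    have "S\<^sup>2 / norm (M $ i) ^ 4 * (15 * norm (M $ i) ^ 6) = 15 * S\<^sup>2 * (norm (M $ i))\<^sup>2" if "i \<in> J" for i
      using that by (simp add: J_def field_simps eval_nat_numeral)
    then show ?thesis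
      by (subst sum_ennreal[symmetric]) (auto intro!: sum.cong simp flip: ennreal_mult)
  qed
  also have "(\<Sum>i\<in>J. 15 * S\<^sup>2 * (norm (M $ i))\<^sup>2) = 15 * S ^ 3"
  proof -
    have "S = (\<Sum>i\<in>J. (norm (M $ i))\<^sup>2)"
      unfolding S_def sum_sq_singular_eq_sum_rows by (intro sum.mono_neutral_right) (auto simp: J_def)
    then show ?thesis
      by (simp add: power2_eq_square power3_eq_cube flip: sum_distrib_left)
  qed
  finally show ?thesis
    by (simp add: S_def)
qed

section \<open>Integration against probability mass functions\<close>

lemma nn_integral_measure_pmf_set_pmf:
  "(\<integral>\<^sup>+b. f b \<partial>measure_pmf q) = (\<integral>\<^sup>+b. ennreal (pmf q b) * f b \<partial>count_space (set_pmf q))"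
  unfolding nn_integral_measure_pmf
  by (subst nn_integral_count_space_indicator) (auto intro!: nn_integral_cong simp: indicator_def set_pmf_eq)

lemma borel_measurable_nn_integral_measure_pmf:
  fixes f :: "'a \<Rightarrow> 'b \<Rightarrow> ennreal"
  assumes "\<And>b. (\<lambda>x. f x b) \<in> borel_measurable N"
  shows "(\<lambda>x. \<integral>\<^sup>+b. f x b \<partial>measure_pmf q) \<in> borel_measurable N"
proof -
  interpret sigma_finite_measure "count_space (set_pmf q)"
    by (rule sigma_finite_measure_count_space_countable) simp
  have "(\<lambda>(b, x). ennreal (pmf q b) * f x b) \<in> borel_measurable (count_space (set_pmf q) \<Otimes>\<^sub>M N)"
    using assms by (intro measurable_pair_measure_countable1) simp_all
  then have "(\<lambda>(x, b). ennreal (pmf q b) * f x b) \<in> borel_measurable (N \<Otimes>\<^sub>M count_space (set_pmf q))"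
    using measurable_pair_swap[of "\<lambda>(b, x). ennreal (pmf q b) * f x b"] by (simp add: case_prod_beta')
  then have "(\<lambda>x. \<integral>\<^sup>+b. ennreal (pmf q b) * f x b \<partial>count_space (set_pmf q)) \<in> borel_measurable N"
    by (rule borel_measurable_nn_integral)
  then show ?thesis
    by (simp add: nn_integral_measure_pmf_set_pmf)
qed

lemma nn_integral_measure_pmf_swap:
  fixes f :: "'a \<Rightarrow> 'b \<Rightarrow> ennreal"
  assumes "\<And>b. (\<lambda>x. f x b) \<in> borel_measurable N"
  shows "(\<integral>\<^sup>+x. \<integral>\<^sup>+b. f x b \<partial>measure_pmf q \<partial>N) = (\<integral>\<^sup>+b. \<integral>\<^sup>+x. f x b \<partial>N \<partial>measure_pmf q)"
proof -
  have "(\<integral>\<^sup>+x. \<integral>\<^sup>+b. f x b \<partial>measure_pmf q \<partial>N)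
      = (\<integral>\<^sup>+x. \<integral>\<^sup>+b. ennreal (pmf q b) * f x b \<partial>count_space (set_pmf q) \<partial>N)"
    by (simp add: nn_integral_measure_pmf_set_pmf)
  also have "\<dots> = (\<integral>\<^sup>+b. \<integral>\<^sup>+x. ennreal (pmf q b) * f x b \<partial>N \<partial>count_space (set_pmf q))"
    using assms by (intro nn_integral_count_space_nn_integral) simp_all
  also have "\<dots> = (\<integral>\<^sup>+b. ennreal (pmf q b) * \<integral>\<^sup>+x. f x b \<partial>N \<partial>count_space (set_pmf q))"
    using assms by (intro nn_integral_cong nn_integral_cmult) simp
  finally show ?thesis
    by (simp add: nn_integral_measure_pmf_set_pmf)
qed

lemma nn_integral_std_gauss_vec_nn_integral_pmf_le:
  fixes M :: "real^'d^'d" and w :: "'i \<Rightarrow> real^'d"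
  assumes sym: "transpose M = M" and contr: "\<And>x. norm (M *v x) \<le> norm x"
  shows "(\<integral>\<^sup>+u. \<integral>\<^sup>+i. ennreal ((w i \<bullet> (M *v u))\<^sup>2 * (norm (M *v u))\<^sup>2) \<partial>measure_pmf p \<partial>std_gauss_vec)
       \<le> ennreal (sum_sq_singular M + 2) * (\<integral>\<^sup>+i. ennreal ((norm (w i))\<^sup>2) \<partial>measure_pmf p)"
proof -
  have "(\<integral>\<^sup>+u. \<integral>\<^sup>+i. ennreal ((w i \<bullet> (M *v u))\<^sup>2 * (norm (M *v u))\<^sup>2) \<partial>measure_pmf p \<partial>std_gauss_vec)
      = (\<integral>\<^sup>+i. \<integral>\<^sup>+u. ennreal ((w i \<bullet> (M *v u))\<^sup>2 * (norm (M *v u))\<^sup>2) \<partial>std_gauss_vec \<partial>measure_pmf p)"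
    by (rule nn_integral_measure_pmf_swap) measurable
  also have "\<dots> \<le> (\<integral>\<^sup>+i. ennreal (sum_sq_singular M + 2) * ennreal ((norm (w i))\<^sup>2) \<partial>measure_pmf p)"
    using nn_integral_std_gauss_vec_inner_sq_norm_sq_le[OF sym contr] sum_sq_singular_nonneg[of M]
    by (intro nn_integral_mono) (simp add: ennreal_mult)
  finally show ?thesis
    by (simp add: nn_integral_cmult)
qed

lemma sq_nn_integral_le:
  assumes "prob_space M" and "f \<in> borel_measurable M"
  shows "(\<integral>\<^sup>+x. f x \<partial>M)\<^sup>2 \<le> (\<integral>\<^sup>+x. f x ^ 2 \<partial>M)"
  using Cauchy_Schwarz_nn_integral[OF assms(2), of "\<lambda>_. 1"]
  by (simp add: prob_space.emeasure_space_1[OF assms(1)])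

lemma sq_nn_integral_nn_integral_measure_pmf_le:
  fixes f :: "'a \<Rightarrow> 'b \<Rightarrow> ennreal"
  assumes N: "prob_space N" and f: "\<And>b. (\<lambda>x. f x b) \<in> borel_measurable N"
  shows "(\<integral>\<^sup>+x. \<integral>\<^sup>+b. f x b \<partial>measure_pmf q \<partial>N)\<^sup>2 \<le> (\<integral>\<^sup>+x. \<integral>\<^sup>+b. f x b ^ 2 \<partial>measure_pmf q \<partial>N)"
proof -
  have "(\<integral>\<^sup>+x. \<integral>\<^sup>+b. f x b \<partial>measure_pmf q \<partial>N)\<^sup>2 \<le> (\<integral>\<^sup>+x. (\<integral>\<^sup>+b. f x b \<partial>measure_pmf q) ^ 2 \<partial>N)"
    by (intro sq_nn_integral_le N borel_measurable_nn_integral_measure_pmf f)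
  also have "\<dots> \<le> (\<integral>\<^sup>+x. \<integral>\<^sup>+b. f x b ^ 2 \<partial>measure_pmf q \<partial>N)"
    by (intro nn_integral_mono sq_nn_integral_le measure_pmf.prob_space_axioms) simp
  finally show ?thesis .
qed

lemma Pi_pmf_component_product:
  fixes X :: "'i \<Rightarrow> real"
  assumes I: "finite I" and jk: "j \<in> I" "k \<in> I" "j \<noteq> k"
    and X: "integrable (measure_pmf p) X"
  shows "integrable (measure_pmf (Pi_pmf I d (\<lambda>_. p))) (\<lambda>f. X (f j) * X (f k))"
    and "(\<integral>f. X (f j) * X (f k) \<partial>measure_pmf (Pi_pmf I d (\<lambda>_. p))) = (\<integral>i. X i \<partial>measure_pmf p)\<^sup>2"
proof -
  define P where "P = Pi_pmf I d (\<lambda>_. p)"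
  have component: "map_pmf (\<lambda>f. f l) P = p" if "l \<in> I" for l
    using Pi_pmf_component[OF I, of l d "\<lambda>_. p"] that by (simp add: P_def)
  have "prob_space.indep_vars P (\<lambda>_. borel) (\<lambda>l f. X (f l)) I"
    using prob_space.indep_vars_compose2[OF measure_pmf.prob_space_axioms indep_vars_Pi_pmf[OF I],
        of "\<lambda>_. X" "\<lambda>_. borel"]
    by (simp add: P_def)
  then have indep: "prob_space.indep_vars P (\<lambda>_. borel) (\<lambda>l f. X (f l)) {j, k}"
    by (rule prob_space.indep_vars_subset[OF measure_pmf.prob_space_axioms]) (use jk in auto)
  have int: "integrable (measure_pmf P) (\<lambda>f. X (f l))" if "l \<in> {j, k}" for l
    using X component[of l] that jk integrable_map_pmf_eq[of "\<lambda>f. f l" P X] by auto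
  have "integrable (measure_pmf P) (\<lambda>f. \<Prod>l\<in>{j, k}. X (f l))"
    by (rule prob_space.indep_vars_integrable[OF measure_pmf.prob_space_axioms _ indep int]) auto
  then show "integrable (measure_pmf (Pi_pmf I d (\<lambda>_. p))) (\<lambda>f. X (f j) * X (f k))"
    using jk by (simp add: P_def)
  have "(\<integral>f. (\<Prod>l\<in>{j, k}. X (f l)) \<partial>measure_pmf P) = (\<Prod>l\<in>{j, k}. \<integral>f. X (f l) \<partial>measure_pmf P)"
    by (rule prob_space.indep_vars_lebesgue_integral[OF measure_pmf.prob_space_axioms _ indep int]) auto
  moreover have "(\<integral>f. X (f l) \<partial>measure_pmf P) = (\<integral>i. X i \<partial>measure_pmf p)" if "l \<in> I" for l
    using integral_map_pmf[of "\<lambda>f. f l" P X] component[OF that] by simp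
  ultimately show "(\<integral>f. X (f j) * X (f k) \<partial>measure_pmf (Pi_pmf I d (\<lambda>_. p))) = (\<integral>i. X i \<partial>measure_pmf p)\<^sup>2"
    using jk by (simp add: P_def power2_eq_square)
qed

lemma nn_integral_Pi_pmf_sum_sq:
  fixes X :: "'i \<Rightarrow> real"
  assumes X2: "integrable (measure_pmf p) (\<lambda>i. (X i)\<^sup>2)"
    and mean: "(\<integral>i. X i \<partial>measure_pmf p) = 0"
  shows "(\<integral>\<^sup>+b. ennreal ((\<Sum>j<B. X (b j))\<^sup>2) \<partial>measure_pmf (Pi_pmf {..<B} d (\<lambda>_. p)))
       = ennreal (real B * (\<integral>i. (X i)\<^sup>2 \<partial>measure_pmf p))"
proof -
  define P where "P = Pi_pmf {..<B} d (\<lambda>_. p)"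
  have X: "integrable (measure_pmf p) X"
    by (rule measure_pmf.square_integrable_imp_integrable[OF _ X2]) simp
  have component: "map_pmf (\<lambda>f. f j) P = p" if "j < B" for j
    using Pi_pmf_component[of "{..<B}" j d "\<lambda>_. p"] that by (simp add: P_def)
  have diagonal: "integrable (measure_pmf P) (\<lambda>f. X (f j) * X (f j))"
    "(\<integral>f. X (f j) * X (f j) \<partial>measure_pmf P) = (\<integral>i. (X i)\<^sup>2 \<partial>measure_pmf p)" if "j < B" for j
    using X2 component[OF that] integrable_map_pmf_eq[of "\<lambda>f. f j" P "\<lambda>i. (X i)\<^sup>2"]
      integral_map_pmf[of "\<lambda>f. f j" P "\<lambda>i. (X i)\<^sup>2"]
    by (simp_all add: power2_eq_square)
  have product: "integrable (measure_pmf P) (\<lambda>f. X (f j) * X (f k))"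
    "(\<integral>f. X (f j) * X (f k) \<partial>measure_pmf P) = (if j = k then \<integral>i. (X i)\<^sup>2 \<partial>measure_pmf p else 0)"
    if "j < B" "k < B" for j k
    using that diagonal Pi_pmf_component_product[OF _ _ _ _ X, of "{..<B}" j k d] mean
    by (auto simp: P_def)
  have square: "(\<Sum>j<B. X (f j))\<^sup>2 = (\<Sum>j<B. \<Sum>k<B. X (f j) * X (f k))" for f
    by (simp add: power2_eq_square sum_product)
  have "integrable (measure_pmf P) (\<lambda>f. (\<Sum>j<B. X (f j))\<^sup>2)"
    unfolding square by (intro Bochner_Integration.integrable_sum product) auto
  moreover have "(\<integral>f. (\<Sum>j<B. X (f j))\<^sup>2 \<partial>measure_pmf P)
      = (\<Sum>j<B. \<Sum>k<B. \<integral>f. X (f j) * X (f k) \<partial>measure_pmf P)"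
    unfolding square
    by (subst Bochner_Integration.integral_sum)
       (auto intro!: sum.cong Bochner_Integration.integral_sum product)
  moreover have "\<dots> = real B * (\<integral>i. (X i)\<^sup>2 \<partial>measure_pmf p)"
    by (simp add: product)
  ultimately show ?thesis
    by (simp add: P_def nn_integral_eq_integral)
qed

section \<open>Smooth functions\<close>

lemma DERIV_along_line:
  fixes h :: "'a::real_inner \<Rightarrow> real"
  assumes "\<And>y. GDERIV h y :> g y"
  shows "DERIV (\<lambda>t. h (\<theta> + t *\<^sub>R x)) t :> g (\<theta> + t *\<^sub>R x) \<bullet> x"
proof -
  have line: "((\<lambda>t. \<theta> + t *\<^sub>R x) has_derivative (\<lambda>s. s *\<^sub>R x)) (at t)"
    by (auto intro!: derivative_eq_intros)
  have "(h has_derivative (\<lambda>v. v \<bullet> g (\<theta> + t *\<^sub>R x))) (at (\<theta> + t *\<^sub>R x))"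
    using assms by (simp add: gderiv_def)
  from has_derivative_compose[OF line this]
  have "((\<lambda>t. h (\<theta> + t *\<^sub>R x)) has_derivative (\<lambda>s. (s *\<^sub>R x) \<bullet> g (\<theta> + t *\<^sub>R x))) (at t)"
    by (simp add: o_def)
  then show ?thesis
    unfolding has_field_derivative_def
    by (rule has_derivative_subst) (auto simp: inner_commute fun_eq_iff)
qed

lemma borel_measurable_gderiv:
  assumes "\<And>x. GDERIV f x :> g x"
  shows "f \<in> borel_measurable borel"
  using assms unfolding gderiv_def
  by (intro borel_measurable_continuous_onI continuous_at_imp_continuous_on ballI has_derivative_continuous)
     blast

lemma abs_first_order_remainder_le:
  fixes h :: "'a::real_inner \<Rightarrow> real"
  assumes grad: "\<And>y. GDERIV h y :> g y"
    and lip: "\<And>y z. norm (g y - g z) \<le> L * norm (y - z)"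
  shows "\<bar>h (\<theta> + x) - h \<theta> - g \<theta> \<bullet> x\<bar> \<le> L / 2 * (norm x)\<^sup>2"
proof -
  define K where "K = L * (norm x)\<^sup>2"
  define \<psi> where "\<psi> t = h (\<theta> + t *\<^sub>R x) - t * (g \<theta> \<bullet> x)" for t
  define \<psi>' where "\<psi>' t = (g (\<theta> + t *\<^sub>R x) - g \<theta>) \<bullet> x" for t
  have "DERIV \<psi> t :> \<psi>' t" for t
    unfolding \<psi>_def \<psi>'_def inner_diff_left
    by (auto intro!: derivative_eq_intros DERIV_along_line[OF grad])
  then have deriv: "DERIV (\<lambda>t. \<psi> t + c * t\<^sup>2) t :> \<psi>' t + 2 * c * t" for c t
    by (auto intro!: derivative_eq_intros)
  have bound: "\<bar>\<psi>' t\<bar> \<le> K * t" if "0 \<le> t" for t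
  proof -
    have "\<bar>\<psi>' t\<bar> \<le> norm (g (\<theta> + t *\<^sub>R x) - g \<theta>) * norm x"
      unfolding \<psi>'_def by (rule Cauchy_Schwarz_ineq2)
    also have "\<dots> \<le> L * norm (t *\<^sub>R x) * norm x"
      using lip[of "\<theta> + t *\<^sub>R x" \<theta>] by (intro mult_right_mono) auto
    finally show ?thesis
      using that by (simp add: K_def power2_eq_square mult_ac)
  qed
  have "\<psi> 1 + (- K / 2) * 1\<^sup>2 \<le> \<psi> 0 + (- K / 2) * 0\<^sup>2"
    by (rule DERIV_nonpos_imp_nonincreasing[OF zero_le_one])
       (use deriv bound in \<open>fastforce simp: abs_le_iff\<close>)
  moreover have "\<psi> 0 + (K / 2) * 0\<^sup>2 \<le> \<psi> 1 + (K / 2) * 1\<^sup>2"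
    by (rule DERIV_nonneg_imp_nondecreasing[OF zero_le_one])
       (use deriv bound in \<open>fastforce simp: abs_le_iff\<close>)
  ultimately show ?thesis
    unfolding abs_le_iff by (simp add: \<psi>_def K_def)
qed

lemma abs_symmetric_difference_remainder_le:
  fixes h :: "'a::real_inner \<Rightarrow> real"
  assumes "\<And>y. GDERIV h y :> g y"
    and "\<And>y z. norm (g y - g z) \<le> L * norm (y - z)"
  shows "\<bar>h (\<theta> + x) - h (\<theta> - x) - 2 * (g \<theta> \<bullet> x)\<bar> \<le> L * (norm x)\<^sup>2"
proof -
  have "\<bar>h (\<theta> + x) - h \<theta> - g \<theta> \<bullet> x\<bar> \<le> L / 2 * (norm x)\<^sup>2"
    "\<bar>h (\<theta> - x) - h \<theta> + g \<theta> \<bullet> x\<bar> \<le> L / 2 * (norm x)\<^sup>2"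
    using abs_first_order_remainder_le[OF assms, of \<theta> x] abs_first_order_remainder_le[OF assms, of \<theta> "- x"]
    by simp_all
  then show ?thesis
    unfolding abs_le_iff by linarith
qed

section \<open>Minibatch gradients and the zeroth-order estimator\<close>

definition batch_grad :: "('i \<Rightarrow> real^'d \<Rightarrow> real^'d) \<Rightarrow> nat \<Rightarrow> (nat \<Rightarrow> 'i) \<Rightarrow> real^'d \<Rightarrow> real^'d"
  where "batch_grad gl B b \<theta> = (1 / real B) *\<^sub>R (\<Sum>j<B. gl (b j) \<theta>)"

lemma gderiv_batch_loss:
  assumes "\<And>i x. GDERIV (loss i) x :> gl i x"
  shows "GDERIV (batch_loss loss B b) y :> batch_grad gl B b y"
proof -
  have "((\<lambda>y. \<Sum>j<B. loss (b j) y) has_derivative (\<lambda>h. \<Sum>j<B. h \<bullet> gl (b j) y)) (at y)"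
    using assms by (intro has_derivative_sum) (simp add: gderiv_def)
  then have "((\<lambda>y. 1 / real B * (\<Sum>j<B. loss (b j) y))
      has_derivative (\<lambda>h. 1 / real B * (\<Sum>j<B. h \<bullet> gl (b j) y))) (at y)"
    by (rule has_derivative_mult_right)
  then show ?thesis
    unfolding gderiv_def batch_loss_def batch_grad_def by (simp add: inner_sum_right)
qed

lemma lipschitz_batch_grad:
  assumes "\<And>i x y. norm (gl i x - gl i y) \<le> L * norm (x - y)" and "B \<ge> 1"
  shows "norm (batch_grad gl B b y - batch_grad gl B b z) \<le> L * norm (y - z)"
proof -
  have "norm (batch_grad gl B b y - batch_grad gl B b z) = norm (\<Sum>j<B. gl (b j) y - gl (b j) z) / real B"
    by (simp add: batch_grad_def sum_subtractf flip: scaleR_diff_right)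
  also have "\<dots> \<le> (\<Sum>j<B. L * norm (y - z)) / real B"
    by (intro divide_right_mono order.trans[OF norm_sum sum_mono] assms) auto
  also have "\<dots> = L * norm (y - z)"
    using assms by simp
  finally show ?thesis .
qed

lemma batch_grad_diff_eq:
  assumes "B \<ge> 1"
  shows "batch_grad gl B b \<theta> - g = (1 / real B) *\<^sub>R (\<Sum>j<B. gl (b j) \<theta> - g)"
proof -
  have "(\<Sum>j<B. g) = real B *\<^sub>R g"
    by (simp only: sum_constant_scaleR card_lessThan)
  with assms show ?thesis
    by (simp add: batch_grad_def sum_subtractf scaleR_diff_right)
qed

lemma nn_integral_batch_grad_deviation_sq:
  fixes gl :: "'i \<Rightarrow> real^'d \<Rightarrow> real^'d" and g v :: "real^'d"
  assumes int: "integrable (measure_pmf p) (\<lambda>i. gl i \<theta>)"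
    and mean: "measure_pmf.expectation p (\<lambda>i. gl i \<theta>) = g"
    and var: "(\<integral>\<^sup>+i. ennreal ((norm (g - gl i \<theta>))\<^sup>2) \<partial>measure_pmf p) \<noteq> \<infinity>"
    and B: "B \<ge> 1"
  shows "(\<integral>\<^sup>+b. ennreal (((batch_grad gl B b \<theta> - g) \<bullet> v)\<^sup>2) \<partial>measure_pmf (Pi_pmf {..<B} d (\<lambda>_. p)))
       = ennreal (1 / real B) * (\<integral>\<^sup>+i. ennreal (((gl i \<theta> - g) \<bullet> v)\<^sup>2) \<partial>measure_pmf p)"
proof -
  define X where "X i = (gl i \<theta> - g) \<bullet> v" for i
  have "(X i)\<^sup>2 \<le> (norm v)\<^sup>2 * (norm (g - gl i \<theta>))\<^sup>2" for i
  proof -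
    have "\<bar>X i\<bar> \<le> norm v * norm (g - gl i \<theta>)"
      using Cauchy_Schwarz_ineq2[of "gl i \<theta> - g" v] by (simp add: X_def norm_minus_commute mult.commute)
    then have "(X i)\<^sup>2 \<le> (norm v * norm (g - gl i \<theta>))\<^sup>2"
      by (metis abs_ge_zero power2_abs power_mono)
    then show ?thesis
      by (simp add: power_mult_distrib)
  qed
  then have "(\<integral>\<^sup>+i. ennreal ((X i)\<^sup>2) \<partial>measure_pmf p)
      \<le> ennreal ((norm v)\<^sup>2) * (\<integral>\<^sup>+i. ennreal ((norm (g - gl i \<theta>))\<^sup>2) \<partial>measure_pmf p)"
    by (subst nn_integral_cmult[symmetric]) (auto intro!: nn_integral_mono ennreal_leI simp flip: ennreal_mult)
  also have "\<dots> < \<infinity>"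
    using var by (simp add: ennreal_mult_less_top less_top)
  finally have X2: "integrable (measure_pmf p) (\<lambda>i. (X i)\<^sup>2)"
    by (intro integrableI_bounded) simp_all
  have "(\<integral>i. X i \<partial>measure_pmf p) = (\<integral>i. gl i \<theta> - g \<partial>measure_pmf p) \<bullet> v"
    unfolding X_def using int by (intro integral_inner_left) auto
  also have "\<dots> = 0"
    using int mean by (simp add: Bochner_Integration.integral_diff)
  finally have X_mean: "(\<integral>i. X i \<partial>measure_pmf p) = 0" .
  have "((batch_grad gl B b \<theta> - g) \<bullet> v)\<^sup>2 = (1 / real B)\<^sup>2 * (\<Sum>j<B. X (b j))\<^sup>2" for b
    by (simp add: batch_grad_diff_eq[OF B] X_def inner_sum_left power_divide)
  then have "(\<integral>\<^sup>+b. ennreal (((batch_grad gl B b \<theta> - g) \<bullet> v)\<^sup>2) \<partial>measure_pmf (Pi_pmf {..<B} d (\<lambda>_. p)))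
      = ennreal ((1 / real B)\<^sup>2) * ennreal (real B * (\<integral>i. (X i)\<^sup>2 \<partial>measure_pmf p))"
    by (simp add: ennreal_mult' nn_integral_cmult nn_integral_Pi_pmf_sum_sq[OF X2 X_mean])
  also have "\<dots> = ennreal (1 / real B) * ennreal (\<integral>i. (X i)\<^sup>2 \<partial>measure_pmf p)"
    using B by (simp add: power2_eq_square flip: ennreal_mult')
  finally show ?thesis
    using X2 by (simp add: X_def nn_integral_eq_integral)
qed

lemma power2_sum3_le:
  fixes a c e :: real
  shows "(a + c + e)\<^sup>2 \<le> 4 * a\<^sup>2 + 4 * c\<^sup>2 + 2 * e\<^sup>2"
proof -
  have "4 * a\<^sup>2 + 4 * c\<^sup>2 + 2 * e\<^sup>2 = (a + c + e)\<^sup>2 + ((a - c)\<^sup>2 + ((2 * a - e)\<^sup>2 + (2 * c - e)\<^sup>2) / 2)"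
    by (simp add: power2_eq_square field_simps)
  then show ?thesis
    by (metis le_add_same_cancel1 zero_le_power2 add_nonneg_nonneg divide_nonneg_pos zero_less_numeral)
qed

lemma norm_zo_est_sq_le:
  fixes M :: "real^'d^'d" and u :: "real^'d"
  assumes grad: "\<And>i x. GDERIV (loss i) x :> gl i x"
    and smooth: "\<And>i x y. norm (gl i x - gl i y) \<le> L * norm (x - y)"
    and B: "B \<ge> 1" and \<mu>: "\<mu> > 0"
  defines "v \<equiv> M *v u"
  shows "(norm (zo_est loss B \<mu> M \<theta> u b))\<^sup>2
       \<le> 4 * (g \<bullet> v)\<^sup>2 * (norm v)\<^sup>2 + 4 * ((batch_grad gl B b \<theta> - g) \<bullet> v)\<^sup>2 * (norm v)\<^sup>2
         + L\<^sup>2 * \<mu>\<^sup>2 / 2 * norm v ^ 6"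
proof -
  define h where "h = batch_loss loss B b"
  define \<Delta> where "\<Delta> = batch_grad gl B b \<theta> - g"
  define D where "D = (h (\<theta> + \<mu> *\<^sub>R v) - h (\<theta> - \<mu> *\<^sub>R v)) / (2 * \<mu>)"
  define e where "e = D - g \<bullet> v - \<Delta> \<bullet> v"
  have "\<bar>h (\<theta> + \<mu> *\<^sub>R v) - h (\<theta> - \<mu> *\<^sub>R v) - 2 * (batch_grad gl B b \<theta> \<bullet> (\<mu> *\<^sub>R v))\<bar>
      \<le> L * (norm (\<mu> *\<^sub>R v))\<^sup>2"
    unfolding h_def
    by (intro abs_symmetric_difference_remainder_le gderiv_batch_loss lipschitz_batch_grad grad smooth B)
  moreover have "e = (h (\<theta> + \<mu> *\<^sub>R v) - h (\<theta> - \<mu> *\<^sub>R v) - 2 * (batch_grad gl B b \<theta> \<bullet> (\<mu> *\<^sub>R v))) / (2 * \<mu>)"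
    using \<mu> by (simp add: e_def D_def \<Delta>_def inner_diff_left diff_divide_distrib)
  ultimately have "\<bar>e\<bar> \<le> L * (norm (\<mu> *\<^sub>R v))\<^sup>2 / (2 * \<mu>)"
    using \<mu> by (simp add: abs_divide divide_right_mono)
  also have "\<dots> = L * \<mu> * (norm v)\<^sup>2 / 2"
    using \<mu> by (simp add: power2_eq_square)
  finally have "e\<^sup>2 \<le> (L * \<mu> * (norm v)\<^sup>2 / 2)\<^sup>2"
    by (metis abs_ge_zero power2_abs power_mono)
  then have "D\<^sup>2 \<le> 4 * (g \<bullet> v)\<^sup>2 + 4 * (\<Delta> \<bullet> v)\<^sup>2 + 2 * (L * \<mu> * (norm v)\<^sup>2 / 2)\<^sup>2"
    using power2_sum3_le[of "g \<bullet> v" "\<Delta> \<bullet> v" e] by (simp add: e_def)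
  then have "D\<^sup>2 * (norm v)\<^sup>2
      \<le> (4 * (g \<bullet> v)\<^sup>2 + 4 * (\<Delta> \<bullet> v)\<^sup>2 + 2 * (L * \<mu> * (norm v)\<^sup>2 / 2)\<^sup>2) * (norm v)\<^sup>2"
    by (rule mult_right_mono) simp
  moreover have "zo_est loss B \<mu> M \<theta> u b = D *\<^sub>R v"
    by (simp add: zo_est_def D_def h_def v_def)
  ultimately show ?thesis
    by (simp add: \<Delta>_def algebra_simps eval_nat_numeral)
qed

lemma borel_measurable_zo_est:
  assumes [measurable]: "\<And>i. loss i \<in> borel_measurable borel"
  shows "(\<lambda>u. zo_est loss B \<mu> M \<theta> u b) \<in> borel_measurable borel"
  unfolding zo_est_def batch_loss_def by measurable

lemma nn_integral_norm_zo_est_sq_le_batch_deviation: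
  fixes M :: "real^'d^'d" and u :: "real^'d"
  assumes grad: "\<And>i x. GDERIV (loss i) x :> gl i x"
    and smooth: "\<And>i x y. norm (gl i x - gl i y) \<le> L * norm (x - y)"
    and B: "B \<ge> 1" and \<mu>: "\<mu> > 0"
  defines "v \<equiv> M *v u"
  shows "(\<integral>\<^sup>+b. ennreal ((norm (zo_est loss B \<mu> M \<theta> u b))\<^sup>2) \<partial>measure_pmf q)
       \<le> 4 * ennreal ((g \<bullet> v)\<^sup>2 * (norm v)\<^sup>2) + ennreal (L\<^sup>2 * \<mu>\<^sup>2 / 2) * ennreal (norm v ^ 6)
         + ennreal (4 * (norm v)\<^sup>2) * (\<integral>\<^sup>+b. ennreal (((batch_grad gl B b \<theta> - g) \<bullet> v)\<^sup>2) \<partial>measure_pmf q)"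
proof -
  let ?c = "4 * ennreal ((g \<bullet> v)\<^sup>2 * (norm v)\<^sup>2) + ennreal (L\<^sup>2 * \<mu>\<^sup>2 / 2) * ennreal (norm v ^ 6)"
  have "(\<integral>\<^sup>+b. ennreal ((norm (zo_est loss B \<mu> M \<theta> u b))\<^sup>2) \<partial>measure_pmf q)
      \<le> (\<integral>\<^sup>+b. ?c + ennreal (4 * (norm v)\<^sup>2) * ennreal (((batch_grad gl B b \<theta> - g) \<bullet> v)\<^sup>2) \<partial>measure_pmf q)"
  proof (intro nn_integral_mono)
    fix b
    define D where "D = ((batch_grad gl B b \<theta> - g) \<bullet> v)\<^sup>2"
    have "(norm (zo_est loss B \<mu> M \<theta> u b))\<^sup>2
        \<le> 4 * ((g \<bullet> v)\<^sup>2 * (norm v)\<^sup>2) + L\<^sup>2 * \<mu>\<^sup>2 / 2 * norm v ^ 6 + 4 * (norm v)\<^sup>2 * D"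
      using norm_zo_est_sq_le[where loss = loss and gl = gl and M = M and u = u and \<theta> = \<theta> and b = b
          and g = g, OF grad smooth B \<mu>]
      by (simp add: v_def D_def algebra_simps)
    then have "ennreal ((norm (zo_est loss B \<mu> M \<theta> u b))\<^sup>2)
        \<le> ennreal (4 * ((g \<bullet> v)\<^sup>2 * (norm v)\<^sup>2) + L\<^sup>2 * \<mu>\<^sup>2 / 2 * norm v ^ 6 + 4 * (norm v)\<^sup>2 * D)"
      by (rule ennreal_leI)
    also have "\<dots> = ?c + ennreal (4 * (norm v)\<^sup>2) * ennreal D"
    proof -
      have "ennreal (L\<^sup>2 * \<mu>\<^sup>2 / 2 * norm v ^ 6) = ennreal (L\<^sup>2 * \<mu>\<^sup>2 / 2) * ennreal (norm v ^ 6)"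
        by (rule ennreal_mult) auto
      then show ?thesis
        by (simp add: D_def ennreal_mult zero_le_even_power)
    qed
    finally show "ennreal ((norm (zo_est loss B \<mu> M \<theta> u b))\<^sup>2) \<le> ?c + ennreal (4 * (norm v)\<^sup>2) * ennreal D" .
  qed
  also have "\<dots> = ?c + ennreal (4 * (norm v)\<^sup>2) * (\<integral>\<^sup>+b. ennreal (((batch_grad gl B b \<theta> - g) \<bullet> v)\<^sup>2) \<partial>measure_pmf q)"
    by (simp add: nn_integral_add nn_integral_cmult measure_pmf.emeasure_space_1)
  finally show ?thesis .
qed

lemma nn_integral_norm_zo_est_sq_le:
  fixes M :: "real^'d^'d" and u :: "real^'d"
  assumes grad: "\<And>i x. GDERIV (loss i) x :> gl i x"
    and smooth: "\<And>i x y. norm (gl i x - gl i y) \<le> L * norm (x - y)"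
    and int: "integrable (measure_pmf p) (\<lambda>i. gl i \<theta>)"
    and mean: "measure_pmf.expectation p (\<lambda>i. gl i \<theta>) = g"
    and var: "(\<integral>\<^sup>+i. ennreal ((norm (g - gl i \<theta>))\<^sup>2) \<partial>measure_pmf p) \<noteq> \<infinity>"
    and B: "B \<ge> 1" and \<mu>: "\<mu> > 0"
  defines "v \<equiv> M *v u"
  shows "(\<integral>\<^sup>+b. ennreal ((norm (zo_est loss B \<mu> M \<theta> u b))\<^sup>2) \<partial>measure_pmf (Pi_pmf {..<B} d (\<lambda>_. p)))
       \<le> 4 * ennreal ((g \<bullet> v)\<^sup>2 * (norm v)\<^sup>2) + ennreal (L\<^sup>2 * \<mu>\<^sup>2 / 2) * ennreal (norm v ^ 6)
         + ennreal (4 / real B) * (\<integral>\<^sup>+i. ennreal (((gl i \<theta> - g) \<bullet> v)\<^sup>2 * (norm v)\<^sup>2) \<partial>measure_pmf p)"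
proof -
  let ?I = "\<integral>\<^sup>+i. ennreal (((gl i \<theta> - g) \<bullet> v)\<^sup>2) \<partial>measure_pmf p"
  have "ennreal (4 * (norm v)\<^sup>2)
      * (\<integral>\<^sup>+b. ennreal (((batch_grad gl B b \<theta> - g) \<bullet> v)\<^sup>2) \<partial>measure_pmf (Pi_pmf {..<B} d (\<lambda>_. p)))
      = (ennreal (4 * (norm v)\<^sup>2) * ennreal (1 / real B)) * ?I"
    by (simp add: nn_integral_batch_grad_deviation_sq[where gl = gl and \<theta> = \<theta>, OF int mean var B] mult.assoc)
  also have "ennreal (4 * (norm v)\<^sup>2) * ennreal (1 / real B) = ennreal (4 / real B) * ennreal ((norm v)\<^sup>2)"
    by (simp flip: ennreal_mult)
  also have "ennreal (4 / real B) * ennreal ((norm v)\<^sup>2) * ?I = ennreal (4 / real B) * (?I * ennreal ((norm v)\<^sup>2))"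
    by (simp only: ac_simps)
  also have "?I * ennreal ((norm v)\<^sup>2) = (\<integral>\<^sup>+i. ennreal (((gl i \<theta> - g) \<bullet> v)\<^sup>2 * (norm v)\<^sup>2) \<partial>measure_pmf p)"
    by (simp add: ennreal_mult nn_integral_multc)
  finally have variance: "ennreal (4 * (norm v)\<^sup>2)
      * (\<integral>\<^sup>+b. ennreal (((batch_grad gl B b \<theta> - g) \<bullet> v)\<^sup>2) \<partial>measure_pmf (Pi_pmf {..<B} d (\<lambda>_. p)))
      = ennreal (4 / real B) * (\<integral>\<^sup>+i. ennreal (((gl i \<theta> - g) \<bullet> v)\<^sup>2 * (norm v)\<^sup>2) \<partial>measure_pmf p)" .
  show ?thesis
    using nn_integral_norm_zo_est_sq_le_batch_deviation[where loss = loss and gl = gl and M = M and u = u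
        and \<theta> = \<theta> and g = g and q = "Pi_pmf {..<B} d (\<lambda>_. p)", OF grad smooth B \<mu>]
    unfolding v_def[symmetric] variance .
qed

lemma nn_integral_norm_zo_est_sq_le_sum_sq_singular:
  fixes loss :: "'i \<Rightarrow> real^'d \<Rightarrow> real" and gl :: "'i \<Rightarrow> real^'d \<Rightarrow> real^'d"
    and M :: "real^'d^'d"
  assumes grad: "\<And>i x. GDERIV (loss i) x :> gl i x"
    and smooth: "\<And>i x y. norm (gl i x - gl i y) \<le> L * norm (x - y)"
    and int: "integrable (measure_pmf p) (\<lambda>i. gl i \<theta>)"
    and mean: "measure_pmf.expectation p (\<lambda>i. gl i \<theta>) = g"
    and var: "(\<integral>\<^sup>+i. ennreal ((norm (g - gl i \<theta>))\<^sup>2) \<partial>measure_pmf p) \<le> ennreal (\<sigma>\<^sup>2)"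
    and B: "B \<ge> 1" and \<mu>: "\<mu> > 0"
    and sym: "transpose M = M" and contr: "\<And>x. norm (M *v x) \<le> norm x"
  defines "S \<equiv> sum_sq_singular M"
  shows "(\<integral>\<^sup>+u. \<integral>\<^sup>+b. ennreal ((norm (zo_est loss B \<mu> M \<theta> u b))\<^sup>2)
            \<partial>measure_pmf (Pi_pmf {..<B} d (\<lambda>_. p)) \<partial>std_gauss_vec)
       \<le> ennreal (15 * \<mu>\<^sup>2 * L\<^sup>2 * S ^ 3 / 2 + 4 * (S + 2) * ((norm g)\<^sup>2 + \<sigma>\<^sup>2 / real B))"
proof -
  let ?G = "std_gauss_vec :: (real^'d) measure"
  define Q where "Q u = (\<integral>\<^sup>+i. ennreal (((gl i \<theta> - g) \<bullet> (M *v u))\<^sup>2 * (norm (M *v u))\<^sup>2) \<partial>measure_pmf p)"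
    for u
  have S: "S \<ge> 0"
    by (simp add: S_def sum_sq_singular_nonneg)
  have var_finite: "(\<integral>\<^sup>+i. ennreal ((norm (g - gl i \<theta>))\<^sup>2) \<partial>measure_pmf p) \<noteq> \<infinity>"
    using var by (auto simp: top_unique)
  have Q_meas: "Q \<in> borel_measurable ?G"
    unfolding Q_def by (intro borel_measurable_nn_integral_measure_pmf) measurable
  have "(\<integral>\<^sup>+u. Q u \<partial>?G) \<le> ennreal (S + 2) * (\<integral>\<^sup>+i. ennreal ((norm (gl i \<theta> - g))\<^sup>2) \<partial>measure_pmf p)"
    unfolding Q_def S_def by (rule nn_integral_std_gauss_vec_nn_integral_pmf_le[OF sym contr])
  also have "\<dots> \<le> ennreal (S + 2) * ennreal (\<sigma>\<^sup>2)"
    using var by (simp add: norm_minus_commute mult_left_mono)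
  finally have Q_le: "(\<integral>\<^sup>+u. Q u \<partial>?G) \<le> ennreal ((S + 2) * \<sigma>\<^sup>2)"
    using S by (simp add: ennreal_mult)
  have "(\<integral>\<^sup>+u. \<integral>\<^sup>+b. ennreal ((norm (zo_est loss B \<mu> M \<theta> u b))\<^sup>2)
            \<partial>measure_pmf (Pi_pmf {..<B} d (\<lambda>_. p)) \<partial>?G)
      \<le> (\<integral>\<^sup>+u. 4 * ennreal ((g \<bullet> (M *v u))\<^sup>2 * (norm (M *v u))\<^sup>2)
            + ennreal (L\<^sup>2 * \<mu>\<^sup>2 / 2) * ennreal (norm (M *v u) ^ 6) + ennreal (4 / real B) * Q u \<partial>?G)"
    unfolding Q_def by (intro nn_integral_mono nn_integral_norm_zo_est_sq_le grad smooth int mean var_finite B \<mu>)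
  also have "\<dots> = 4 * (\<integral>\<^sup>+u. ennreal ((g \<bullet> (M *v u))\<^sup>2 * (norm (M *v u))\<^sup>2) \<partial>?G)
      + ennreal (L\<^sup>2 * \<mu>\<^sup>2 / 2) * (\<integral>\<^sup>+u. ennreal (norm (M *v u) ^ 6) \<partial>?G)
      + ennreal (4 / real B) * (\<integral>\<^sup>+u. Q u \<partial>?G)"
    using Q_meas by (simp add: nn_integral_add nn_integral_cmult)
  also have "\<dots> \<le> 4 * ennreal ((S + 2) * (norm g)\<^sup>2) + ennreal (L\<^sup>2 * \<mu>\<^sup>2 / 2) * ennreal (15 * S ^ 3)
      + ennreal (4 / real B) * ennreal ((S + 2) * \<sigma>\<^sup>2)"
    unfolding S_def
    by (intro add_mono mult_left_mono Q_le[unfolded S_def] nn_integral_std_gauss_vec_norm_pow6_le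
        nn_integral_std_gauss_vec_inner_sq_norm_sq_le sym contr) simp_all
  also have "\<dots> = ennreal (4 * ((S + 2) * (norm g)\<^sup>2) + L\<^sup>2 * \<mu>\<^sup>2 / 2 * (15 * S ^ 3)
      + 4 / real B * ((S + 2) * \<sigma>\<^sup>2))"
  proof -
    have "0 \<le> (S + 2) * (norm g)\<^sup>2" "0 \<le> L\<^sup>2 * \<mu>\<^sup>2 / 2" "0 \<le> 15 * S ^ 3" "0 \<le> 4 / real B"
      "0 \<le> (S + 2) * \<sigma>\<^sup>2"
      using S by simp_all
    then show ?thesis
      by (simp only: ennreal_plus ennreal_mult mult_nonneg_nonneg add_nonneg_nonneg ennreal_numeral
          zero_le_numeral)
  qed
  also have "4 * ((S + 2) * (norm g)\<^sup>2) + L\<^sup>2 * \<mu>\<^sup>2 / 2 * (15 * S ^ 3) + 4 / real B * ((S + 2) * \<sigma>\<^sup>2)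
      = 15 * \<mu>\<^sup>2 * L\<^sup>2 * S ^ 3 / 2 + 4 * (S + 2) * ((norm g)\<^sup>2 + \<sigma>\<^sup>2 / real B)"
    by (simp add: algebra_simps)
  finally show ?thesis .
qed

theorem mainTheorem9:
  fixes loss :: "'i \<Rightarrow> real^'d \<Rightarrow> real"
    and gl :: "'i \<Rightarrow> real^'d \<Rightarrow> real^'d"
    and Lf :: "real^'d \<Rightarrow> real"
    and gL :: "real^'d \<Rightarrow> real^'d"
    and p :: "'i pmf"
    and Lsm \<sigma> G \<mu> s :: real
    and B :: nat
    and M :: "real^'d^'d"
    and \<theta> :: "real^'d"
  assumes grad_i: "\<And>i x. GDERIV (loss i) x :> gl i x"
    and smooth: "\<And>i x y. norm (gl i x - gl i y) \<le> Lsm * norm (x - y)"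
    and grad_L: "\<And>x. GDERIV Lf x :> gL x"
    and unbiased_int: "\<And>x. integrable (measure_pmf p) (\<lambda>i. gl i x)"
    and unbiased: "\<And>x. measure_pmf.expectation p (\<lambda>i. gl i x) = gL x"
    and var: "\<And>x. (\<integral>\<^sup>+ i. ennreal ((norm (gL x - gl i x))\<^sup>2) \<partial>measure_pmf p) \<le> ennreal (\<sigma>\<^sup>2)"
    and bdd: "\<And>x. norm (gL x) \<le> G"
    and B_pos: "B \<ge> 1"
    and mu_pos: "\<mu> > 0"
    and M_sym: "transpose M = M"
    and M_psd: "\<And>x. x \<bullet> (M *v x) \<ge> 0"
    and M_smax: "sigma_max M = 1"
    and M_srank: "srank M \<le> s"
  shows "(\<integral>\<^sup>+ u. \<integral>\<^sup>+ b. ennreal (norm (zo_est loss B \<mu> M \<theta> u b))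
              \<partial>measure_pmf (Pi_pmf {..<B} undefined (\<lambda>_. p)) \<partial>std_gauss_vec)\<^sup>2
         \<le> (\<integral>\<^sup>+ u. \<integral>\<^sup>+ b. ennreal ((norm (zo_est loss B \<mu> M \<theta> u b))\<^sup>2)
              \<partial>measure_pmf (Pi_pmf {..<B} undefined (\<lambda>_. p)) \<partial>std_gauss_vec)
       \<and> (\<integral>\<^sup>+ u. \<integral>\<^sup>+ b. ennreal ((norm (zo_est loss B \<mu> M \<theta> u b))\<^sup>2)
              \<partial>measure_pmf (Pi_pmf {..<B} undefined (\<lambda>_. p)) \<partial>std_gauss_vec)
         \<le> ennreal (15 * \<mu>\<^sup>2 * Lsm\<^sup>2 * s ^ 3 / 2
                    + 4 * (s + 2) * ((norm (gL \<theta>))\<^sup>2 + \<sigma>\<^sup>2 / real B))"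
proof -
  let ?P = "measure_pmf (Pi_pmf {..<B} undefined (\<lambda>_. p))"
  have contr: "norm (M *v x) \<le> norm x" for x
    using norm_matrix_vector_mult_le_sigma_max[of M x] M_smax by simp
  have S: "0 \<le> sum_sq_singular M" "sum_sq_singular M \<le> s"
    using sum_sq_singular_nonneg[of M] M_srank by (simp_all add: sum_sq_singular_eq_srank[OF M_smax])
  have [measurable]: "(\<lambda>u. zo_est loss B \<mu> M \<theta> u b) \<in> borel_measurable borel" for b
    using borel_measurable_gderiv[OF grad_i] by (rule borel_measurable_zo_est)
  have "(\<integral>\<^sup>+ u. \<integral>\<^sup>+ b. ennreal (norm (zo_est loss B \<mu> M \<theta> u b)) \<partial>?P \<partial>std_gauss_vec)\<^sup>2
      \<le> (\<integral>\<^sup>+ u. \<integral>\<^sup>+ b. ennreal ((norm (zo_est loss B \<mu> M \<theta> u b))\<^sup>2) \<partial>?P \<partial>std_gauss_vec)"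
    using sq_nn_integral_nn_integral_measure_pmf_le[OF prob_space_std_gauss_vec,
        of "\<lambda>u b. ennreal (norm (zo_est loss B \<mu> M \<theta> u b))"]
    by (simp add: ennreal_power)
  moreover have "(\<integral>\<^sup>+ u. \<integral>\<^sup>+ b. ennreal ((norm (zo_est loss B \<mu> M \<theta> u b))\<^sup>2) \<partial>?P \<partial>std_gauss_vec)
      \<le> ennreal (15 * \<mu>\<^sup>2 * Lsm\<^sup>2 * sum_sq_singular M ^ 3 / 2
          + 4 * (sum_sq_singular M + 2) * ((norm (gL \<theta>))\<^sup>2 + \<sigma>\<^sup>2 / real B))"
    by (rule nn_integral_norm_zo_est_sq_le_sum_sq_singular[OF grad_i smooth unbiased_int unbiased var B_pos
          mu_pos M_sym contr])
  moreover have "\<dots> \<le> ennreal (15 * \<mu>\<^sup>2 * Lsm\<^sup>2 * s ^ 3 / 2 + 4 * (s + 2) * ((norm (gL \<theta>))\<^sup>2 + \<sigma>\<^sup>2 / real B))"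
    using S by (intro ennreal_leI add_mono mult_left_mono mult_right_mono power_mono divide_right_mono) auto
  ultimately show ?thesis
    by (meson order.trans)
qed

end
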